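(* Let $c\in(0,1)$ and let $f:[0,1]\to[0,1]$ be a piecewise contracting map with contraction pieces $X_1=[0,c)$ and $X_2=(c,1]$, whose continuous extensions $f_1:[0,c]\to[0,1]$ and $f_2:[c,1]\to[0,1]$ are increasing and satisfy $0=f_2(c)<f_2(1)<f_1(0)<f_1(c)=1$. For $k\in\mathbb{N}$ let $H_k:=f^k\big((f(1),f(0))\big)$. If $c\notin\overline{H_k}$ for all $k\in\mathbb{N}$, then $H_k=(f^{k+1}(1),f^{k+1}(0))$ for all $k\in\mathbb{N}$, \[ \Lambda_n=[0,1]\setminus\bigcup_{k=0}^{n-1}H_k\qquad\forall\, n\geqslant 1, \] $\{0,1\}\subset\widetilde X$, and for every $n\geqslant 1$ and every $A\in\mathcal{A}_n$ there exist $p,q\in\mathbb{N}$ with $A=[f^p(0),f^q(1)]$.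
   Context: Piecewise contracting: $f$ is discontinuous at $c$ and there is $\lambda\in(0,1)$ with $|f(x)-f(y)|\leqslant\lambda|x-y|$ for $x,y$ both in $[0,c)$ or both in $(c,1]$. $\Delta=\{c\}$ and $\widetilde X:=\bigcap_{n\geqslant0}f^{-n}([0,1]\setminus\{c\})$. Atoms: $F_i(A):=\overline{f(A\cap X_i)}$ for $i=1,2$, and $A_{i_1\dots i_n}:=F_{i_n}\circ\dots\circ F_{i_1}([0,1])$ is an atom of generation $n$ if non-empty; $\mathcal{A}_n$ is the set of atoms of generation $n$ and $\Lambda_n:=\bigcup_{A\in\mathcal{A}_n}A$. $f^k(S)$ denotes the image of a set $S$ under $f^k$; $\mathbb{N}=\{0,1,\dots\}$. *)

theory Defs
  imports "HOL-Analysis.Analysis"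
begin

definition piece :: "real \<Rightarrow> nat \<Rightarrow> real set" where
  "piece c i = (if i = 1 then {0..<c} else {c<..1})"

definition atomF :: "(real \<Rightarrow> real) \<Rightarrow> real \<Rightarrow> nat \<Rightarrow> real set \<Rightarrow> real set" where
  "atomF f c i A = closure (f ` (A \<inter> piece c i))"

text \<open>A_{i_1...i_n} = F_{i_n} o ... o F_{i_1} ([0,1]); the word is applied left to right.\<close>
definition atom_word :: "(real \<Rightarrow> real) \<Rightarrow> real \<Rightarrow> nat list \<Rightarrow> real set" where
  "atom_word f c ws = fold (atomF f c) ws {0..1}"

definition atoms :: "(real \<Rightarrow> real) \<Rightarrow> real \<Rightarrow> nat \<Rightarrow> real set set" where
  "atoms f c n = {A. \<exists>ws. length ws = n \<and> set ws \<subseteq> {1,2} \<and> A = atom_word f c ws \<and> A \<noteq> {}}"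

definition Lambda :: "(real \<Rightarrow> real) \<Rightarrow> real \<Rightarrow> nat \<Rightarrow> real set" where
  "Lambda f c n = \<Union> (atoms f c n)"

definition Xtilde :: "(real \<Rightarrow> real) \<Rightarrow> real \<Rightarrow> real set" where
  "Xtilde f c = (\<Inter>n. {x \<in> {0..1}. (f ^^ n) x \<in> {0..1} - {c}})"

end

theory Submission
  imports Defs
begin

text \<open>Each branch is an increasing homeomorphism onto its image, and together the branches cover
  [0,1] except the gap (f 1, f 0). As long as the closure of H_k avoids c, f maps H_k
  homeomorphically onto H_(k+1), so every H_k is the open interval between the orbit points of
  1 and 0, and these orbits never hit c. Since f is injective off c, the image of
  [0,1] minus the first n gaps is (0, f 1] \<union> [f 0, 1) minus the next n gaps, whose closure is
  [0,1] minus the first n+1 gaps. Likewise each F_i sends an interval [f^p 0, f^q 1] to an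
  interval of the same kind.\<close>

lemma continuous_strict_mono_on_image_intervals:
  fixes g :: "real \<Rightarrow> real"
  assumes cont: "continuous_on {s..t} g" and mono: "strict_mono_on {s..t} g"
    and uv: "s \<le> u" "u \<le> v" "v \<le> t"
  shows "g ` {u..v} = {g u..g v}"
    and "g ` {u<..<v} = {g u<..<g v}"
    and "g ` {u..<v} = {g u..<g v}"
    and "g ` {u<..v} = {g u<..g v}"
proof -
  have sub: "{u..v} \<subseteq> {s..t}" using uv by auto
  have closed: "g ` {u..v} = {g u..g v}"
  proof
    show "g ` {u..v} \<subseteq> {g u..g v}"
      using sub uv by (auto intro!: strict_mono_on_leD[OF mono])
    show "{g u..g v} \<subseteq> g ` {u..v}"
    proof
      fix y assume "y \<in> {g u..g v}"
      then obtain x where "u \<le> x" "x \<le> v" "g x = y"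
        using IVT'[of g u y v] uv continuous_on_subset[OF cont sub] by auto
      then show "y \<in> g ` {u..v}" by auto
    qed
  qed
  have inj: "inj_on g {u..v}"
    using inj_on_subset[OF strict_mono_on_imp_inj_on[OF mono] sub] .
  have punctured: "g ` ({u..v} - P) = {g u..g v} - g ` P" if "P \<subseteq> {u..v}" for P
    using inj_on_image_set_diff[OF inj _ that] closed by simp
  show "g ` {u..v} = {g u..g v}" by (fact closed)
  have "{u<..<v} = {u..v} - {u, v}" "{g u<..<g v} = {g u..g v} - g ` {u, v}"
    by auto
  then show "g ` {u<..<v} = {g u<..<g v}"
    using punctured[of "{u, v}"] uv by simp
  have "{u..<v} = {u..v} - {v}" "{g u..<g v} = {g u..g v} - g ` {v}"
    by auto
  then show "g ` {u..<v} = {g u..<g v}"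
    using punctured[of "{v}"] uv by simp
  have "{u<..v} = {u..v} - {u}" "{g u<..g v} = {g u..g v} - g ` {u}"
    by auto
  then show "g ` {u<..v} = {g u<..g v}"
    using punctured[of "{u}"] uv by simp
qed

lemma closure_UN_finite:
  fixes A :: "'i \<Rightarrow> 'a::topological_space set"
  assumes "finite I"
  shows "closure (\<Union>i\<in>I. A i) = (\<Union>i\<in>I. closure (A i))"
  using assms by (induction I rule: finite_induct) (auto simp: closure_Un)

lemma atomF_UN_finite:
  assumes "finite I"
  shows "atomF f c i (\<Union>j\<in>I. A j) = (\<Union>j\<in>I. atomF f c i (A j))"
proof -
  have "(\<Union>j\<in>I. A j) \<inter> piece c i = (\<Union>j\<in>I. A j \<inter> piece c i)" by blast
  then show ?thesis
    unfolding atomF_def by (simp only: image_UN closure_UN_finite[OF assms])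
qed

lemma atomF_1_Un_atomF_2:
  assumes "c \<in> {0..1}"
  shows "atomF f c 1 A \<union> atomF f c 2 A = closure (f ` (A \<inter> ({0..1} - {c})))"
proof -
  have "A \<inter> ({0..1} - {c}) = A \<inter> piece c 1 \<union> A \<inter> piece c 2"
    using assms by (auto simp: piece_def)
  then show ?thesis by (simp add: atomF_def closure_Un image_Un)
qed

definition binary_words :: "nat \<Rightarrow> nat list set" where
  "binary_words n = {ws. length ws = n \<and> set ws \<subseteq> {1, 2}}"

lemma finite_binary_words: "finite (binary_words n)"
  using finite_lists_length_eq[of "{1::nat, 2}" n] by (simp add: binary_words_def conj_commute)

lemma binary_words_Suc:
  "binary_words (Suc n) = (\<Union>i\<in>{1, 2}. (\<lambda>ws. ws @ [i]) ` binary_words n)"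
  by (auto simp: binary_words_def length_Suc_conv_rev)

lemma Lambda_eq_UN_atom_word: "Lambda f c n = (\<Union>ws\<in>binary_words n. atom_word f c ws)"
  unfolding Lambda_def atoms_def binary_words_def by blast

lemma Lambda_0: "Lambda f c 0 = {0..1}"
  by (simp add: Lambda_eq_UN_atom_word binary_words_def atom_word_def)

lemma Lambda_Suc: "Lambda f c (Suc n) = atomF f c 1 (Lambda f c n) \<union> atomF f c 2 (Lambda f c n)"
  by (simp add: Lambda_eq_UN_atom_word binary_words_Suc atomF_UN_finite[OF finite_binary_words]
      atom_word_def UN_Un_distrib)

lemma closure_Diff_closure_subset: "closure S - closure T \<subseteq> closure (S - T)"
proof -
  have "- closure T \<inter> closure S \<subseteq> closure (- closure T \<inter> S)"
    by (intro open_Int_closure_subset open_Compl closed_closure)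
  also have "\<dots> \<subseteq> closure (S - T)"
    using closure_subset by (intro closure_mono) blast
  finally show ?thesis by blast
qed

locale increasing_gap_map =
  fixes f f1 f2 :: "real \<Rightarrow> real" and c :: real
  assumes c_between: "0 < c" "c < 1"
    and f1_cont: "continuous_on {0..c} f1" and f1_eq: "\<And>x. x \<in> {0..<c} \<Longrightarrow> f1 x = f x"
    and f2_cont: "continuous_on {c..1} f2" and f2_eq: "\<And>x. x \<in> {c<..1} \<Longrightarrow> f2 x = f x"
    and f1_mono: "strict_mono_on {0..c} f1" and f2_mono: "strict_mono_on {c..1} f2"
    and branch_values: "f2 c = 0" "f2 1 < f1 0" "f1 c = 1"
begin

lemma f_0: "f 0 = f1 0" and f_1: "f 1 = f2 1"
  using f1_eq f2_eq c_between by auto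

lemma gap_bounds: "0 < f 1" "f 1 < f 0" "f 0 < 1"
  using strict_mono_onD[OF f2_mono, of c 1] strict_mono_onD[OF f1_mono, of 0 c]
    branch_values c_between by (auto simp: f_0 f_1)

lemma image_left: "S \<subseteq> {0..<c} \<Longrightarrow> f ` S = f1 ` S"
  using f1_eq by (auto intro!: image_cong)

lemma image_right: "S \<subseteq> {c<..1} \<Longrightarrow> f ` S = f2 ` S"
  using f2_eq by (auto intro!: image_cong)

lemmas f1_image_intervals = continuous_strict_mono_on_image_intervals[OF f1_cont f1_mono]
lemmas f2_image_intervals = continuous_strict_mono_on_image_intervals[OF f2_cont f2_mono]

lemma image_left_piece: "f ` {0..<c} = {f 0..<1}"
  using image_left[of "{0..<c}"] f1_image_intervals(3)[of 0 c] c_between branch_values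
  by (simp add: f_0)

lemma image_right_piece: "f ` {c<..1} = {0<..f 1}"
  using image_right[of "{c<..1}"] f2_image_intervals(4)[of c 1] c_between branch_values
  by (simp add: f_1)

lemma punctured_eq_pieces: "{0..1} - {c} = {0..<c} \<union> {c<..1}"
  using c_between by auto

lemma image_punctured: "f ` ({0..1} - {c}) = {0<..f 1} \<union> {f 0..<1}"
  by (simp add: punctured_eq_pieces image_Un image_left_piece image_right_piece Un_commute)

lemma maps_punctured_into_open: "x \<in> {0..1} - {c} \<Longrightarrow> f x \<in> {0<..<1}"
  using image_punctured gap_bounds by fastforce

lemma inj_on_punctured: "inj_on f ({0..1} - {c})"
proof -
  have "inj_on f {0..<c}"
    using inj_on_subset[OF strict_mono_on_imp_inj_on[OF f1_mono]] f1_eq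
    by (metis atLeastLessThan_subseteq_atLeastAtMost_iff inj_on_cong order_refl)
  moreover have "inj_on f {c<..1}"
    using inj_on_subset[OF strict_mono_on_imp_inj_on[OF f2_mono]] f2_eq
    by (metis greaterThanAtMost_subseteq_atLeastAtMost_iff inj_on_cong order_refl)
  moreover have "f ` {0..<c} \<inter> f ` {c<..1} = {}"
    using gap_bounds by (auto simp: image_left_piece image_right_piece)
  ultimately show ?thesis
    by (auto simp: punctured_eq_pieces inj_on_Un)
qed

lemma image_interval_avoiding_c:
  assumes "0 \<le> u" "u \<le> v" "v \<le> 1" "c \<notin> {u..v}"
  shows "f ` {u..v} = {f u..f v}" "f ` {u<..<v} = {f u<..<f v}"
proof -
  consider "v < c" | "c < u" using assms by force
  then have "f ` {u..v} = {f u..f v} \<and> f ` {u<..<v} = {f u<..<f v}"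
  proof cases
    case 1
    then have "{u..v} \<subseteq> {0..<c}" "{u<..<v} \<subseteq> {0..<c}" using assms by auto
    then show ?thesis
      using 1 assms image_left f1_image_intervals(1,2)[of u v] f1_eq[of u] f1_eq[of v] by simp
  next
    case 2
    then have "{u..v} \<subseteq> {c<..1}" "{u<..<v} \<subseteq> {c<..1}" using assms by auto
    then show ?thesis
      using 2 assms image_right f2_image_intervals(1,2)[of u v] f2_eq[of u] f2_eq[of v] by simp
  qed
  then show "f ` {u..v} = {f u..f v}" "f ` {u<..<v} = {f u<..<f v}" by auto
qed

lemma atomF_1_interval:
  assumes u: "u \<in> {0..1} - {c}" and v: "v \<in> {0..1} - {c}"
  shows "atomF f c 1 {u..v} \<in> {{f u..f v}, {f u..1}, {}}"
proof -
  consider (inside) "u \<le> v" "v < c" | (straddle) "u < c" "c < v"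
    | (outside) "{u..v} \<inter> {0..<c} = {}"
    using u v by force
  then show ?thesis
  proof cases
    case inside
    then have "{u..v} \<inter> piece c 1 = {u..v}" using u by (auto simp: piece_def)
    then show ?thesis using inside u v image_interval_avoiding_c(1)[of u v] by (simp add: atomF_def)
  next
    case straddle
    then have "{u..v} \<inter> piece c 1 = {u..<c}" using u v by (auto simp: piece_def)
    moreover have "f ` {u..<c} = f1 ` {u..<c}" using u by (intro image_left) auto
    then have "f ` {u..<c} = {f u..<1}"
      using f1_image_intervals(3)[of u c] f1_eq[of u] straddle u branch_values by simp
    moreover have "f u < 1" using maps_punctured_into_open[OF u] by simp
    ultimately show ?thesis by (simp add: atomF_def)
  qed (simp add: atomF_def piece_def)
qed

lemma atomF_2_interval:
  assumes u: "u \<in> {0..1} - {c}" and v: "v \<in> {0..1} - {c}"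
  shows "atomF f c 2 {u..v} \<in> {{f u..f v}, {0..f v}, {}}"
proof -
  consider (inside) "c < u" "u \<le> v" | (straddle) "u < c" "c < v"
    | (outside) "{u..v} \<inter> {c<..1} = {}"
    using u v by force
  then show ?thesis
  proof cases
    case inside
    then have "{u..v} \<inter> piece c 2 = {u..v}" using v by (auto simp: piece_def)
    then show ?thesis using inside u v image_interval_avoiding_c(1)[of u v] by (simp add: atomF_def)
  next
    case straddle
    then have "{u..v} \<inter> piece c 2 = {c<..v}" using u v by (auto simp: piece_def)
    moreover have "f ` {c<..v} = f2 ` {c<..v}" using v by (intro image_right) auto
    then have "f ` {c<..v} = {0<..f v}"
      using f2_image_intervals(4)[of c v] f2_eq[of v] straddle v branch_values by simp
    moreover have "0 < f v" using maps_punctured_into_open[OF v] by simp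
    ultimately show ?thesis by (simp add: atomF_def)
  qed (simp add: atomF_def piece_def)
qed

end

locale increasing_gap_map_avoiding_c = increasing_gap_map +
  assumes c_notin_closure_orbit_of_gap: "\<And>k. c \<notin> closure ((f ^^ k) ` {f 1<..<f 0})"
begin

definition H :: "nat \<Rightarrow> real set" where
  "H k = (f ^^ k) ` {f 1<..<f 0}"

lemma H_Suc: "H (Suc k) = f ` H k"
  by (simp add: H_def image_comp)

lemma H_eq_orbit_interval:
  "H k = {(f ^^ Suc k) 1<..<(f ^^ Suc k) 0} \<and>
    0 < (f ^^ Suc k) 1 \<and> (f ^^ Suc k) 1 < (f ^^ Suc k) 0 \<and> (f ^^ Suc k) 0 < 1"
proof (induction k)
  case 0
  then show ?case using gap_bounds by (simp add: H_def)
next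
  case (Suc k)
  define u v where "u = (f ^^ Suc k) 1" and "v = (f ^^ Suc k) 0"
  have IH: "H k = {u<..<v}" "0 < u" "u < v" "v < 1"
    using Suc.IH by (simp_all add: u_def v_def)
  have "c \<notin> {u..v}"
    using c_notin_closure_orbit_of_gap[of k] IH by (simp add: H_def[symmetric])
  then have "H (Suc k) = {f u<..<f v}"
    using IH image_interval_avoiding_c(2)[of u v] by (simp add: H_Suc)
  moreover have "f u \<in> {0<..<1}" "f v \<in> {0<..<1}"
    using IH \<open>c \<notin> {u..v}\<close> maps_punctured_into_open[of u] maps_punctured_into_open[of v]
    by auto
  moreover have "H (Suc k) \<noteq> {}"
    using IH by (simp add: H_Suc)
  ultimately show ?case
    by (simp add: u_def v_def)
qed

lemma c_notin_orbit_interval: "c \<notin> {(f ^^ Suc k) 1..(f ^^ Suc k) 0}"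
  using c_notin_closure_orbit_of_gap[of k] H_eq_orbit_interval[of k]
  by (simp add: H_def[symmetric])

lemma orbits_avoid_c: "(f ^^ n) 0 \<in> {0..1} - {c} \<and> (f ^^ n) 1 \<in> {0..1} - {c}"
  using c_between H_eq_orbit_interval[of "n - 1"] c_notin_orbit_interval[of "n - 1"]
  by (cases n) auto

text \<open>The empty atom also has this form, as {f 0..f 1}.\<close>

lemma atomF_orbit_interval:
  assumes "i \<in> {1, 2}"
  shows "\<exists>p' q'. atomF f c i {(f ^^ p) 0..(f ^^ q) 1} = {(f ^^ p') 0..(f ^^ q') 1}"
proof -
  define u v where "u = (f ^^ p) 0" and "v = (f ^^ q) 1"
  have "atomF f c i {u..v} \<in> {{f u..f v}, {f u..1}, {0..f v}, {}}"
    using assms atomF_1_interval[of u v] atomF_2_interval[of u v] orbits_avoid_c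
    by (auto simp: u_def v_def)
  moreover have "{f u..f v} = {(f ^^ Suc p) 0..(f ^^ Suc q) 1}"
    "{f u..1} = {(f ^^ Suc p) 0..(f ^^ 0) 1}" "{0..f v} = {(f ^^ 0) 0..(f ^^ Suc q) 1}"
    "{} = {(f ^^ 1) 0..(f ^^ 1) 1}"
    using gap_bounds by (simp_all add: u_def v_def)
  ultimately show ?thesis
    unfolding u_def v_def by blast
qed

lemma atom_word_orbit_interval:
  "set ws \<subseteq> {1, 2} \<Longrightarrow> \<exists>p q. atom_word f c ws = {(f ^^ p) 0..(f ^^ q) 1}"
proof (induction ws rule: rev_induct)
  case Nil
  have "atom_word f c [] = {(f ^^ 0) 0..(f ^^ 0) 1}" by (simp add: atom_word_def)
  then show ?case by blast
next
  case (snoc i ws)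
  then obtain p q where "atom_word f c ws = {(f ^^ p) 0..(f ^^ q) 1}" by auto
  moreover have "atom_word f c (ws @ [i]) = atomF f c i (atom_word f c ws)"
    by (simp add: atom_word_def)
  ultimately show ?case
    using atomF_orbit_interval snoc.prems by simp
qed

lemma closure_H_subset: "closure (H k) \<subseteq> {0<..<1}"
  using H_eq_orbit_interval[of k] by auto

lemma H_subset_punctured: "H k \<subseteq> {0..1} - {c}"
  using H_eq_orbit_interval[of k] c_notin_orbit_interval[of k] by auto

lemma open_H: "open (H k)"
  using H_eq_orbit_interval[of k] by simp

text \<open>The gaps are open and their closures stay inside (0,1), so taking the closure adds
  back exactly the points 0 and 1.\<close>

lemma closure_image_minus_gaps:
  "closure ({0<..f 1} \<union> {f 0..<1} - (\<Union>k<n. H (Suc k))) = {0..1} - (\<Union>k<Suc n. H k)"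
proof -
  define W V where "W = {0<..f 1} \<union> {f 0..<1}" and "V = (\<Union>k<n. H (Suc k))"
  have "closure V \<subseteq> {0<..<1}"
    using closure_H_subset by (auto simp: V_def closure_UN_finite)
  have closure_W: "closure W = {0..f 1} \<union> {f 0..1}"
    using gap_bounds by (simp add: W_def closure_Un)
  have complement: "{0..f 1} \<union> {f 0..1} - V = {0..1} - (H 0 \<union> V)"
    using gap_bounds by (auto simp: H_def)
  have "V \<inter> closure (W - V) = {}"
    by (simp add: open_Int_closure_eq_empty V_def open_H open_UN)
  moreover have "closure (W - V) \<subseteq> closure W"
    by (simp add: closure_mono)
  ultimately have "closure (W - V) \<subseteq> {0..1} - (H 0 \<union> V)"
    using closure_W complement by blast
  moreover have "{0..1} - (H 0 \<union> V) \<subseteq> (W - V) \<union> (closure W - closure V)"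
  proof
    fix x assume x: "x \<in> {0..1} - (H 0 \<union> V)"
    show "x \<in> (W - V) \<union> (closure W - closure V)"
    proof (cases "x \<in> {0, 1}")
      case True
      then show ?thesis using \<open>closure V \<subseteq> {0<..<1}\<close> closure_W gap_bounds by auto
    next
      case False
      then show ?thesis using x gap_bounds by (auto simp: W_def H_def)
    qed
  qed
  then have "{0..1} - (H 0 \<union> V) \<subseteq> closure (W - V)"
    using closure_subset closure_Diff_closure_subset by blast
  ultimately have "closure (W - V) = {0..1} - (H 0 \<union> V)"
    by blast
  moreover have "(\<Union>k<Suc n. H k) = H 0 \<union> V"
    by (simp add: V_def lessThan_Suc_eq_insert_0)
  ultimately show ?thesis
    by (simp add: W_def V_def)
qed

lemma Lambda_eq_complement_gaps: "Lambda f c n = {0..1} - (\<Union>k<n. H k)"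
proof (induction n)
  case 0
  then show ?case by (simp add: Lambda_0)
next
  case (Suc n)
  have "Lambda f c (Suc n) = closure (f ` (({0..1} - (\<Union>k<n. H k)) \<inter> ({0..1} - {c})))"
    unfolding Lambda_Suc Suc.IH using c_between by (intro atomF_1_Un_atomF_2) auto
  also have "({0..1} - (\<Union>k<n. H k)) \<inter> ({0..1} - {c}) = {0..1} - {c} - (\<Union>k<n. H k)"
    by blast
  also have "f ` ({0..1} - {c} - (\<Union>k<n. H k)) = f ` ({0..1} - {c}) - f ` (\<Union>k<n. H k)"
    using H_subset_punctured by (intro inj_on_image_set_diff[OF inj_on_punctured]) auto
  also have "\<dots> = {0<..f 1} \<union> {f 0..<1} - (\<Union>k<n. H (Suc k))"
    by (simp add: image_punctured image_UN H_Suc)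
  finally show ?case
    using closure_image_minus_gaps by simp
qed

end

theorem lemma7:
  fixes f f1 f2 :: "real \<Rightarrow> real" and c :: real
  assumes c: "0 < c" "c < 1"
    and f_maps: "\<forall>x\<in>{0..1}. f x \<in> {0..1}"
    and f_discont: "\<not> continuous (at c within {0..1}) f"
    and contr: "\<exists>L::real. 0 < L \<and> L < 1 \<and>
        (\<forall>x\<in>{0..<c}. \<forall>y\<in>{0..<c}. \<bar>f x - f y\<bar> \<le> L * \<bar>x - y\<bar>) \<and>
        (\<forall>x\<in>{c<..1}. \<forall>y\<in>{c<..1}. \<bar>f x - f y\<bar> \<le> L * \<bar>x - y\<bar>)"
    and f1_ext: "continuous_on {0..c} f1" "\<forall>x\<in>{0..<c}. f1 x = f x"
      "\<forall>x\<in>{0..c}. f1 x \<in> {0..1}"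
    and f2_ext: "continuous_on {c..1} f2" "\<forall>x\<in>{c<..1}. f2 x = f x"
      "\<forall>x\<in>{c..1}. f2 x \<in> {0..1}"
    and f1_inc: "strict_mono_on {0..c} f1"
    and f2_inc: "strict_mono_on {c..1} f2"
    and order: "0 = f2 c" "f2 c < f2 1" "f2 1 < f1 0" "f1 0 < f1 c" "f1 c = 1"
    and hyp: "\<forall>k::nat. c \<notin> closure ((f ^^ k) ` {f 1<..<f 0})"
  shows "(\<forall>k::nat. (f ^^ k) ` {f 1<..<f 0} = {(f ^^ Suc k) 1<..<(f ^^ Suc k) 0})
       \<and> (\<forall>n\<ge>1. Lambda f c n = {0..1} - (\<Union>k<n. (f ^^ k) ` {f 1<..<f 0}))
       \<and> {0, 1} \<subseteq> Xtilde f c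
       \<and> (\<forall>n\<ge>1. \<forall>A\<in>atoms f c n. \<exists>p q. A = {(f ^^ p) 0..(f ^^ q) 1})"
proof -
  interpret increasing_gap_map_avoiding_c f f1 f2 c
    by unfold_locales (use assms in auto)
  have "\<forall>k. (f ^^ k) ` {f 1<..<f 0} = {(f ^^ Suc k) 1<..<(f ^^ Suc k) 0}"
    using H_eq_orbit_interval by (simp add: H_def)
  moreover have "\<forall>n. Lambda f c n = {0..1} - (\<Union>k<n. (f ^^ k) ` {f 1<..<f 0})"
    using Lambda_eq_complement_gaps by (simp add: H_def)
  moreover have "{0, 1} \<subseteq> Xtilde f c"
    using orbits_avoid_c by (auto simp: Xtilde_def)
  moreover have "\<forall>A\<in>atoms f c n. \<exists>p q. A = {(f ^^ p) 0..(f ^^ q) 1}" for n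
    using atom_word_orbit_interval by (auto simp: atoms_def)
  ultimately show ?thesis
    by blast
qed

end
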